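(* Consider the flat $G(3)$-contact supergeometry on $J^1=J^1(\mathbb{C}^{2|2},\mathbb{C}^{1|0})$ (defined in the context) and let $\mathcal{E}=\widehat{\mathcal V}\subset J^2(\mathbb{C}^{2|2},\mathbb{C}^{1|0})$ be the collection of affine tangent spaces along its field of $(1|2)$-twisted cubics $\mathcal V$. Then $\mathcal E$ is a sub-supermanifold of dimension $(6|6)$ and it is given by the $G(3)$-contact super-PDE system $$u_{xx}=\tfrac13u_{yy}^3+2u_{yy}u_{y\nu}u_{y\tau},\quad u_{xy}=\tfrac12u_{yy}^2+u_{y\nu}u_{y\tau},\quad u_{x\nu}=u_{yy}u_{y\nu},\quad u_{x\tau}=u_{yy}u_{y\tau},\quad u_{\nu\tau}=-u_{yy}.$$
   Context: $J^1=J^1(\mathbb{C}^{2|2},\mathbb{C}^{1|0})$ has coordinates $(x^0,x^1,x^2,x^3,u,u_0,\dots,u_3)=(x,y,\nu,\tau,u,u_x,u_y,u_\nu,u_\tau)$, with $x,y,u,u_x,u_y$ even and the others odd; it has contact form $\sigma=du-\sum_i(dx^i)u_i$ and contact distribution $\mathcal C=\ker\sigma$ with flat frame $D_i=\partial_{x^i}+u_i\partial_u$, $U^i=\partial_{u_i}$ ($i=0,\dots,3$). $J^2=J^2(\mathbb{C}^{2|2},\mathbb{C}^{1|0})$ is the bundle of Lagrangian subspaces of $(\mathcal C,[d\sigma|_{\mathcal C}])$ with fibre coordinates $u_{ij}=(-1)^{|i||j|}u_{ji}$ (parity $|i|$ of $x^i$), the point $(u_{ij})$ corresponding to the Lagrangian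 subspace spanned by $D_i+\sum_ju_{ij}U^j$. Points and subspaces are understood via the functor of points: for a finite-dimensional supercommutative algebra $\mathbb A$, take $\lambda\in\mathbb A_{\bar0}$, $\theta,\phi\in\mathbb A_{\bar1}$. The field of $(1|2)$-twisted cubics $\mathcal V\subset\mathbb P(\mathcal C)$ of the flat frame consists, at each point, of the rank $(1|0)$ free $\mathbb A$-submodules spanned by $V=D_0-\lambda D_1-\theta D_2-\phi D_3-(\tfrac{\lambda^3}{6}+\lambda\theta\phi)U^0-(\tfrac{\lambda^2}{2}+\theta\phi)U^1-\lambda\phi U^2+\lambda\theta U^3$, together with (Zariski closure) the point at infinity spanned by $U^0$. The affine tangent space of $\mathcal V$ at the super-point spanned by $V$ is the Lagrangian $\mathbb A$-module spanned by $V$ and its derivatives in $\lambda,\theta,\phi$; explicitly it is spanned by $B_0=D_0+(\tfrac{\lambda^3}{3}+2\lambda\theta\phi)U^0+(\tfrac{\lambda^2}{2}+\theta\phi)U^1+\lambda\phi U^2-\lambda\theta U^3$, $B_1=D_1+(\tfrac{\lambda^2}{2}+\theta\phi)U^0+\lambda U^1+\phi U^2-\theta U^3$, $B_2=D_2+\lambda\phi U^0+\phi U^1-\lambda U^3$, $B_3=D_3-\lambda\theta U^0-\theta U^1+\lambda U^2$. $\widehat{\mathcal V}\subset J^2$ is the collection of these affine tangent spaces as the super-point varies along $\mathcal V$ (at all points of $J^1$). *)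

theory Defs
  imports Complex_Main
begin

text \<open>A finite-dimensional supercommutative (unital, associative) algebra over the complex
numbers, presented by its underlying ring (type 'a), the structure map
emb : complex -> A (central unital ring homomorphism, so scalar multiplication is
c . x = emb c * x), and its even and odd parts Ev, Od (a Z/2-grading).\<close>

definition supercomm_alg :: "(complex \<Rightarrow> 'a::ring_1) \<Rightarrow> 'a set \<Rightarrow> 'a set \<Rightarrow> bool" where
  "supercomm_alg emb Ev Od \<longleftrightarrow>
     (\<forall>a b. emb (a + b) = emb a + emb b) \<and> (\<forall>a b. emb (a * b) = emb a * emb b) \<and> emb 1 = 1 \<and>
     (\<forall>c x. emb c * x = x * emb c) \<and> (\<forall>c. emb c \<in> Ev) \<and>
     0 \<in> Od \<and>
     (\<forall>x\<in>Ev. \<forall>y\<in>Ev. x + y \<in> Ev) \<and> (\<forall>c. \<forall>x\<in>Ev. emb c * x \<in> Ev) \<and>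
     (\<forall>x\<in>Od. \<forall>y\<in>Od. x + y \<in> Od) \<and> (\<forall>c. \<forall>x\<in>Od. emb c * x \<in> Od) \<and>
     (\<forall>x. \<exists>!p. p \<in> Ev \<times> Od \<and> x = fst p + snd p) \<and>
     (\<forall>x\<in>Ev. \<forall>y\<in>Ev. x * y \<in> Ev) \<and>
     (\<forall>x\<in>Ev. \<forall>y\<in>Od. x * y \<in> Od \<and> y * x \<in> Od) \<and>
     (\<forall>x\<in>Od. \<forall>y\<in>Od. x * y \<in> Ev) \<and>
     (\<forall>x\<in>Ev. \<forall>y. x * y = y * x) \<and>
     (\<forall>x\<in>Od. \<forall>y\<in>Od. x * y = - (y * x)) \<and>
     (\<exists>B. finite B \<and> (\<forall>x. \<exists>c. x = (\<Sum>b\<in>B. emb (c b) * b)))"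

datatype j1coord = Cx | Cy | Cnu | Ctau | Cu | Cux | Cuy | Cunu | Cutau

fun j1odd :: "j1coord \<Rightarrow> bool" where
  "j1odd Cnu = True" | "j1odd Ctau = True" | "j1odd Cunu = True" | "j1odd Cutau = True"
| "j1odd _ = False"

text \<open>A-points of J^1: parity-respecting coordinate assignments.\<close>
definition J1pts :: "'a set \<Rightarrow> 'a set \<Rightarrow> (j1coord \<Rightarrow> 'a) set" where
  "J1pts Ev Od = {p. \<forall>c. p c \<in> (if j1odd c then Od else Ev)}"

datatype idx = Ix | Iy | Inu | Itau

fun iodd :: "idx \<Rightarrow> bool" where
  "iodd Inu = True" | "iodd Itau = True" | "iodd _ = False"

text \<open>A-points of a fibre of J^2 (in the chart u_ij): u_ij has parity |i|+|j| and
u_ij = (-1)^{|i||j|} u_ji.\<close>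
definition J2fib :: "'a::ring_1 set \<Rightarrow> 'a set \<Rightarrow> (idx \<Rightarrow> idx \<Rightarrow> 'a) \<Rightarrow> bool" where
  "J2fib Ev Od u \<longleftrightarrow>
     (\<forall>i j. u i j \<in> (if iodd i = iodd j then Ev else Od) \<and>
            u i j = (if iodd i \<and> iodd j then - u j i else u j i))"

text \<open>Coefficients u_ij of the affine tangent space spanned by B_i = D_i + sum_j u_ij U^j
(as listed in the context) at the super-point of the twisted cubic with parameters
lambda (even), theta, phi (odd).\<close>
fun Bcoef :: "(complex \<Rightarrow> 'a::ring_1) \<Rightarrow> 'a \<Rightarrow> 'a \<Rightarrow> 'a \<Rightarrow> idx \<Rightarrow> idx \<Rightarrow> 'a" where
  "Bcoef emb l t f Ix Ix = emb (1/3) * l^3 + 2 * l * t * f"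
| "Bcoef emb l t f Ix Iy = emb (1/2) * l^2 + t * f"
| "Bcoef emb l t f Ix Inu = l * f"
| "Bcoef emb l t f Ix Itau = - (l * t)"
| "Bcoef emb l t f Iy Ix = emb (1/2) * l^2 + t * f"
| "Bcoef emb l t f Iy Iy = l"
| "Bcoef emb l t f Iy Inu = f"
| "Bcoef emb l t f Iy Itau = - t"
| "Bcoef emb l t f Inu Ix = l * f"
| "Bcoef emb l t f Inu Iy = f"
| "Bcoef emb l t f Inu Inu = 0"
| "Bcoef emb l t f Inu Itau = - l"
| "Bcoef emb l t f Itau Ix = - (l * t)"
| "Bcoef emb l t f Itau Iy = - t"
| "Bcoef emb l t f Itau Inu = l"
| "Bcoef emb l t f Itau Itau = 0"

text \<open>A-points of \<open>\<E> = \<V>-hat\<close> in J^2: pairs (point of J^1, chart coordinates of an affine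
tangent space of the twisted cubic field at that point).\<close>
definition Ehat :: "(complex \<Rightarrow> 'a::ring_1) \<Rightarrow> 'a set \<Rightarrow> 'a set \<Rightarrow> ((j1coord \<Rightarrow> 'a) \<times> (idx \<Rightarrow> idx \<Rightarrow> 'a)) set" where
  "Ehat emb Ev Od = {(p, Bcoef emb l t f) | p l t f. p \<in> J1pts Ev Od \<and> l \<in> Ev \<and> t \<in> Od \<and> f \<in> Od}"

definition G3_pde :: "(complex \<Rightarrow> 'a::ring_1) \<Rightarrow> (idx \<Rightarrow> idx \<Rightarrow> 'a) \<Rightarrow> bool" where
  "G3_pde emb u \<longleftrightarrow>
     u Ix Ix = emb (1/3) * (u Iy Iy)^3 + 2 * u Iy Iy * u Iy Inu * u Iy Itau \<and>
     u Ix Iy = emb (1/2) * (u Iy Iy)^2 + u Iy Inu * u Iy Itau \<and>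
     u Ix Inu = u Iy Iy * u Iy Inu \<and>
     u Ix Itau = u Iy Iy * u Iy Itau \<and>
     u Inu Itau = - u Iy Iy"

end

(* An affine tangent space of the twisted cubic is recorded by its coefficient matrix
   Bcoef lambda theta phi, whose entries u_yy = lambda, u_ynu = phi, u_ytau = -theta give
   back the parameters.  Hence (p, lambda, theta, phi) |-> (p, Bcoef lambda theta phi)
   parametrises E injectively by J^1 x A_0 x A_1 x A_1, of dimension (5|4) + (1|2) = (6|6).
   Writing the remaining entries in terms of u_yy, u_ynu, u_ytau gives exactly the five
   equations (the signs come from theta phi = - phi theta); conversely a supersymmetric
   matrix solving them is the Bcoef of its own (u_yy, -u_ytau, u_ynu), its odd diagonal
   entries vanishing because 2 is invertible. *)
theory Submission
  imports Defs
begin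

lemma J2fib_parity: "J2fib Ev Od u \<Longrightarrow> u i j \<in> (if iodd i = iodd j then Ev else Od)"
  unfolding J2fib_def by blast

lemma J2fib_swap: "J2fib Ev Od u \<Longrightarrow> u j i = (if iodd i \<and> iodd j then - u i j else u i j)"
  unfolding J2fib_def by metis

context
  fixes emb :: "complex \<Rightarrow> 'a::ring_1" and Ev Od :: "'a set"
  assumes superalg: "supercomm_alg emb Ev Od"
begin

lemma emb_add: "emb (a + b) = emb a + emb b"
  and emb_mult: "emb (a * b) = emb a * emb b"
  and emb_one: "emb 1 = 1"
  and Ev_emb: "emb c \<in> Ev"
  and Ev_add: "x \<in> Ev \<Longrightarrow> y \<in> Ev \<Longrightarrow> x + y \<in> Ev"
  and Ev_scale: "x \<in> Ev \<Longrightarrow> emb c * x \<in> Ev"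
  and Od_scale: "x \<in> Od \<Longrightarrow> emb c * x \<in> Od"
  and Ev_mult: "x \<in> Ev \<Longrightarrow> y \<in> Ev \<Longrightarrow> x * y \<in> Ev"
  and Ev_Od_mult: "x \<in> Ev \<Longrightarrow> y \<in> Od \<Longrightarrow> x * y \<in> Od"
  and Od_mult: "x \<in> Od \<Longrightarrow> y \<in> Od \<Longrightarrow> x * y \<in> Ev"
  and Od_anticommute: "x \<in> Od \<Longrightarrow> y \<in> Od \<Longrightarrow> x * y = - (y * x)"
  using superalg unfolding supercomm_alg_def by metis+

lemma emb_zero: "emb 0 = 0"
  using emb_add[of 0 0] by simp

lemma emb_uminus: "emb (- c) = - emb c"
  by (rule minus_unique[symmetric]) (simp flip: emb_add add: emb_zero)

lemma uminus_eq_emb_mult: "- x = emb (- 1) * x"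
  by (simp add: emb_uminus emb_one)

lemma Ev_uminus: "x \<in> Ev \<Longrightarrow> - x \<in> Ev"
  and Od_uminus: "x \<in> Od \<Longrightarrow> - x \<in> Od"
  by (simp_all only: uminus_eq_emb_mult Ev_scale Od_scale)

lemma Ev_zero: "0 \<in> Ev"
  using Ev_emb[of 0] by (simp add: emb_zero)

lemma Ev_two: "2 \<in> Ev"
  using Ev_emb[of 2] emb_add[of 1 1] by (simp add: emb_one)

lemma Ev_power: "x \<in> Ev \<Longrightarrow> x ^ n \<in> Ev"
  by (induction n) (simp_all add: Ev_mult flip: emb_one, rule Ev_emb)

lemma self_neg_eq_zero:
  fixes x :: 'a
  assumes "x = - x"
  shows "x = 0"
proof -
  have two: "emb 2 = 2"
    using emb_add[of 1 1] by (simp add: emb_one)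
  have half: "emb (1/2) * 2 = 1"
    using emb_mult[of "1/2" 2] by (simp add: emb_one two)
  have "x = (emb (1/2) * 2) * x"
    by (simp add: half)
  also have "\<dots> = emb (1/2) * (x + x)"
    by (simp only: mult.assoc mult_2)
  also have "\<dots> = 0"
    using assms by (simp add: eq_neg_iff_add_eq_0)
  finally show ?thesis .
qed

lemma J2fib_Bcoef:
  assumes l: "l \<in> Ev" and t: "t \<in> Od" and f: "f \<in> Od"
  shows "J2fib Ev Od (Bcoef emb l t f)"
proof -
  have "emb (1/3) * l^3 + 2 * l * t * f \<in> Ev"
    using l t f by (blast intro: Ev_add Ev_mult Ev_emb Ev_power Ev_two Od_mult Ev_Od_mult)
  moreover have "emb (1/2) * l^2 + t * f \<in> Ev"
    using l t f by (blast intro: Ev_add Ev_mult Ev_emb Ev_power Od_mult)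
  moreover have "l * f \<in> Od" "- (l * t) \<in> Od"
    using l t f by (blast intro: Ev_Od_mult Od_uminus)+
  ultimately show ?thesis
    unfolding J2fib_def using l t f Ev_zero Ev_uminus Od_uminus
    by (intro allI, case_tac i; case_tac j) simp_all
qed

lemma G3_pde_Bcoef:
  assumes "t \<in> Od" "f \<in> Od"
  shows "G3_pde emb (Bcoef emb l t f)"
  using Od_anticommute[OF assms(2,1)] unfolding G3_pde_def by (simp add: mult.assoc)

lemma J2fib_odd_diagonal_zero:
  assumes "J2fib Ev Od u" "iodd i"
  shows "u i i = 0"
  using assms J2fib_swap[OF assms(1), of i i] by (intro self_neg_eq_zero) simp

lemma J2fib_G3_pde_eq_Bcoef:
  assumes J: "J2fib Ev Od u" and P: "G3_pde emb u"
  shows "u = Bcoef emb (u Iy Iy) (- u Iy Itau) (u Iy Inu)"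
proof (intro ext)
  fix i j
  have "u Iy Inu * u Iy Itau = - (u Iy Itau * u Iy Inu)"
    using J2fib_parity[OF J, of Iy Inu] J2fib_parity[OF J, of Iy Itau]
    by (intro Od_anticommute) simp_all
  moreover have "u Iy Ix = u Ix Iy" "u Inu Ix = u Ix Inu" "u Itau Ix = u Ix Itau"
    "u Inu Iy = u Iy Inu" "u Itau Iy = u Iy Itau" "u Itau Inu = - u Inu Itau"
    using J2fib_swap[OF J, of Ix Iy] J2fib_swap[OF J, of Ix Inu] J2fib_swap[OF J, of Ix Itau]
      J2fib_swap[OF J, of Iy Inu] J2fib_swap[OF J, of Iy Itau] J2fib_swap[OF J, of Inu Itau]
    by simp_all
  ultimately show "u i j = Bcoef emb (u Iy Iy) (- u Iy Itau) (u Iy Inu) i j"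
    using P J2fib_odd_diagonal_zero[OF J]
    by (cases i; cases j) (simp_all add: G3_pde_def mult.assoc)
qed

end

lemma Bcoef_inject:
  "Bcoef emb l t f = Bcoef emb l' t' f' \<longleftrightarrow> l = l' \<and> t = t' \<and> f = f'"
proof
  assume "Bcoef emb l t f = Bcoef emb l' t' f'"
  then have "Bcoef emb l t f Iy Iy = Bcoef emb l' t' f' Iy Iy"
    "Bcoef emb l t f Iy Itau = Bcoef emb l' t' f' Iy Itau"
    "Bcoef emb l t f Iy Inu = Bcoef emb l' t' f' Iy Inu"
    by simp_all
  then show "l = l' \<and> t = t' \<and> f = f'"
    by simp
qed simp

lemma Ehat_eq_image:
  "Ehat emb Ev Od = (\<lambda>(p, l, t, f). (p, Bcoef emb l t f)) ` (J1pts Ev Od \<times> Ev \<times> Od \<times> Od)"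
  unfolding Ehat_def by (force simp: image_iff)

theorem theorem4p7:
  fixes emb :: "complex \<Rightarrow> 'a::ring_1" and Ev Od :: "'a set"
  assumes "supercomm_alg emb Ev Od"
  shows "Ehat emb Ev Od = {(p, u). p \<in> J1pts Ev Od \<and> J2fib Ev Od u \<and> G3_pde emb u}
         \<and> bij_betw (\<lambda>(p, l, t, f). (p, Bcoef emb l t f)) (J1pts Ev Od \<times> Ev \<times> Od \<times> Od) (Ehat emb Ev Od)"
proof
  show "Ehat emb Ev Od = {(p, u). p \<in> J1pts Ev Od \<and> J2fib Ev Od u \<and> G3_pde emb u}"
  proof (intro equalityI subsetI; clarify)
    fix p u assume "(p, u) \<in> Ehat emb Ev Od"
    then show "p \<in> J1pts Ev Od \<and> J2fib Ev Od u \<and> G3_pde emb u"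
      unfolding Ehat_def using J2fib_Bcoef G3_pde_Bcoef assms by blast
  next
    fix p u assume p: "p \<in> J1pts Ev Od" and J: "J2fib Ev Od u" and P: "G3_pde emb u"
    have "u Iy Iy \<in> Ev" "- u Iy Itau \<in> Od" "u Iy Inu \<in> Od"
      using J2fib_parity[OF J, of Iy Iy] J2fib_parity[OF J, of Iy Itau]
        J2fib_parity[OF J, of Iy Inu] Od_uminus[OF assms]
      by simp_all
    then show "(p, u) \<in> Ehat emb Ev Od"
      unfolding Ehat_def using p J2fib_G3_pde_eq_Bcoef[OF assms J P] by blast
  qed
  show "bij_betw (\<lambda>(p, l, t, f). (p, Bcoef emb l t f)) (J1pts Ev Od \<times> Ev \<times> Od \<times> Od) (Ehat emb Ev Od)"
    unfolding bij_betw_def Ehat_eq_image by (auto intro: inj_onI simp: Bcoef_inject)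
qed

end
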